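(* Let $n\ge 1$, $N=2^n$, and let $H$ be the $N\times N$ symmetric Toeplitz matrix with entries $H_{i,j}=a_{|i-j|}$ (indices $i,j\in\{0,\dots,N-1\}$). For $1\le k\le N-1$ define \[ M_k = a_k \sum_{i=0}^{N-1-k} \big(\ket{i}\bra{i+k} + \ket{i+k}\bra{i}\big). \] Let $k=2^m$ with $0\le m\le n-1$. Let $T_k = I^{\otimes (n-m-1)} \otimes X \otimes I^{\otimes m}$ (where $X$ is the Pauli $X$ matrix and $I$ the $2\times 2$ identity), let $P$ be the $N\times N$ permutation matrix (so $P^{-1}=P^T$) acting as the cyclic decrement $P\ket{i}=\ket{(i-1)\bmod N}$, and let $E_k$ be the $N\times N$ matrix obtained from $T_k$ by setting its bottom-right $2k\times 2k$ submatrix to zero, i.e. (with $0$-based indices) $(E_k)_{i,j}=(T_k)_{i,j}$ if $i< N-2k$ or $j< N-2k$, and $(E_k)_{i,j}=0$ if $i\ge N-2k$ and $j\ge N-2k$. Then \[ M_k = \begin{cases} a_k\left(T_k + P^{-k}E_kP^{k}\right) & \text{if } m<n-1,\\ a_k T_k & \text{if } m=n-1.\end{cases} \]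
   Context: Computational basis states $\ket{i}$, $i\in\{0,\dots,N-1\}$, of $n$ qubits are identified with $\ket{i_n i_{n-1}\cdots i_1}$ where $i=\sum_{l=1}^n i_l 2^{l-1}$, the leftmost tensor factor corresponding to the most significant bit $i_n$. Thus $T_k$ flips the bit of weight $2^m$. *)

theory Defs
  imports "Jordan_Normal_Form.Matrix"
begin

definition ketbra :: "nat \<Rightarrow> nat \<Rightarrow> nat \<Rightarrow> complex mat" where
  "ketbra N i j = mat N N (\<lambda>(r,c). if r = i \<and> c = j then 1 else 0)"

definition mat_sum_upto :: "nat \<Rightarrow> nat \<Rightarrow> (nat \<Rightarrow> complex mat) \<Rightarrow> complex mat" where
  "mat_sum_upto N r f = foldr (\<lambda>i acc. f i + acc) [0..<r] (0\<^sub>m N N)"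

definition Mk :: "nat \<Rightarrow> (nat \<Rightarrow> complex) \<Rightarrow> nat \<Rightarrow> complex mat" where
  "Mk n a k = a k \<cdot>\<^sub>m mat_sum_upto (2^n) (2^n - k)
      (\<lambda>i. ketbra (2^n) i (i+k) + ketbra (2^n) (i+k) i)"

(* Kronecker product; leftmost factor = most significant index digit *)
definition kron :: "complex mat \<Rightarrow> complex mat \<Rightarrow> complex mat" where
  "kron A B = mat (dim_row A * dim_row B) (dim_col A * dim_col B)
     (\<lambda>(i,j). A $$ (i div dim_row B, j div dim_col B) * B $$ (i mod dim_row B, j mod dim_col B))"

fun kron_pow :: "complex mat \<Rightarrow> nat \<Rightarrow> complex mat" where
  "kron_pow A 0 = 1\<^sub>m 1"
| "kron_pow A (Suc r) = kron A (kron_pow A r)"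

definition pauliX :: "complex mat" where
  "pauliX = mat 2 2 (\<lambda>(i,j). if i \<noteq> j then 1 else 0)"

definition id2 :: "complex mat" where
  "id2 = 1\<^sub>m 2"

definition Tk :: "nat \<Rightarrow> nat \<Rightarrow> complex mat" where
  "Tk n m = kron (kron (kron_pow id2 (n - m - 1)) pauliX) (kron_pow id2 m)"

definition Pdec :: "nat \<Rightarrow> complex mat" where
  "Pdec N = mat N N (\<lambda>(r,c). if int r = (int c - 1) mod int N then 1 else 0)"

definition Ek :: "nat \<Rightarrow> nat \<Rightarrow> complex mat" where
  "Ek n m = mat (2^n) (2^n) (\<lambda>(i,j).
     if i < 2^n - 2 * 2^m \<or> j < 2^n - 2 * 2^m then Tk n m $$ (i,j) else 0)"

end

theory Submission
  imports Defs
begin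

(* T_k flips the bit of weight k, so its nonzero entries sit at (r, r + k) and (r + k, r) for
   r div k even, while M_k has the entry a_k at all these positions regardless of parity.
   Conjugating by P^k moves entry (i, j) of E_k to (i + k, j + k) mod N, which turns the pairs
   with i div k even into exactly the pairs with r div k odd; zeroing the bottom-right 2k x 2k
   block of E_k removes the pairs that would wrap around modulo N. For m = n - 1 every pair
   (r, r + k) has r < k, so a_k T_k alone already is M_k. *)

lemma foldr_add_mat:
  assumes "\<And>i. f i \<in> carrier_mat N N"
  shows "foldr (\<lambda>i acc. f i + acc) xs (0\<^sub>m N N) \<in> carrier_mat N N \<and>
    (\<forall>r<N. \<forall>c<N. foldr (\<lambda>i acc. f i + acc) xs (0\<^sub>m N N) $$ (r,c) = (\<Sum>i\<leftarrow>xs. f i $$ (r,c)))"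
  by (induction xs) (use assms in auto)

lemma
  assumes "\<And>i. f i \<in> carrier_mat N N"
  shows mat_sum_upto_carrier: "mat_sum_upto N t f \<in> carrier_mat N N"
    and index_mat_sum_upto: "r < N \<Longrightarrow> c < N \<Longrightarrow> mat_sum_upto N t f $$ (r,c) = (\<Sum>i<t. f i $$ (r,c))"
  using assms foldr_add_mat[of f N "[0..<t]"]
  by (simp_all add: mat_sum_upto_def atLeast0LessThan flip: sum_set_upt_conv_sum_list_nat)

lemma sum_of_bool_eq_conj:
  "finite A \<Longrightarrow> (\<Sum>i\<in>A. of_bool (i = x \<and> P i) :: 'a::semiring_1) = of_bool (x \<in> A \<and> P x)"
  by (simp add: of_bool_conj sum.delta)

lemma ketbra_carrier: "ketbra N i j \<in> carrier_mat N N"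
  by (simp add: ketbra_def)

lemma Mk_carrier: "Mk n a k \<in> carrier_mat (2^n) (2^n)"
  by (simp add: Mk_def ketbra_carrier mat_sum_upto_carrier)

lemma index_Mk:
  assumes "r < 2^n" "c < 2^n"
  shows "Mk n a k $$ (r,c) = a k * (of_bool (c = r + k) + of_bool (r = c + k))"
proof -
  let ?S = "mat_sum_upto (2^n) (2^n - k) (\<lambda>i. ketbra (2^n) i (i+k) + ketbra (2^n) (i+k) i)"
  have "?S \<in> carrier_mat (2^n) (2^n)"
    by (simp add: ketbra_carrier mat_sum_upto_carrier)
  then have "Mk n a k $$ (r,c) = a k * (\<Sum>i<2^n - k. of_bool (i = r \<and> c = i + k) + of_bool (i = c \<and> r = i + k))"
    using assms by (auto simp: Mk_def ketbra_carrier index_mat_sum_upto ketbra_def of_bool_def intro!: sum.cong)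
  also have "\<dots> = a k * (of_bool (c = r + k) + of_bool (r = c + k))"
    unfolding sum.distrib sum_of_bool_eq_conj[OF finite_lessThan] using assms by auto
  finally show ?thesis .
qed

lemma dim_kron [simp]:
  "dim_row (kron A B) = dim_row A * dim_row B" "dim_col (kron A B) = dim_col A * dim_col B"
  by (simp_all add: kron_def)

lemma index_kron:
  "i < dim_row A * dim_row B \<Longrightarrow> j < dim_col A * dim_col B \<Longrightarrow>
   kron A B $$ (i,j) = A $$ (i div dim_row B, j div dim_col B) * B $$ (i mod dim_row B, j mod dim_col B)"
  by (simp add: kron_def)

lemma kron_one_one:
  assumes "0 < B"
  shows "kron (1\<^sub>m A) (1\<^sub>m B) = 1\<^sub>m (A * B)"
proof (rule eq_matI)
  fix i j
  assume "i < dim_row (1\<^sub>m (A * B) :: complex mat)" "j < dim_col (1\<^sub>m (A * B) :: complex mat)"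
  moreover have "i = j" if "i div B = j div B" "i mod B = j mod B"
    using that by (metis div_mult_mod_eq)
  ultimately show "kron (1\<^sub>m A) (1\<^sub>m B) $$ (i, j) = 1\<^sub>m (A * B) $$ (i, j)"
    using assms by (auto simp: index_kron less_mult_imp_div_less)
qed auto

lemma kron_pow_id2: "kron_pow id2 r = 1\<^sub>m (2^r)"
  by (induction r) (simp_all add: id2_def kron_one_one)

lemma add_eq_iff_div_mod:
  fixes r c K :: nat
  assumes "0 < K"
  shows "c = r + K \<longleftrightarrow> c div K = Suc (r div K) \<and> c mod K = r mod K"
proof
  assume "c div K = Suc (r div K) \<and> c mod K = r mod K"
  then have "c = Suc (r div K) * K + r mod K"
    using div_mult_mod_eq[of c K] by simp
  then show "c = r + K"
    by simp
qed (use assms in \<open>simp add: div_add_self2\<close>)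

lemma same_half_other_parity_iff:
  fixes p q :: nat
  shows "q div 2 = p div 2 \<and> q mod 2 \<noteq> p mod 2 \<longleftrightarrow> (p = Suc q \<and> even q) \<or> (q = Suc p \<and> even p)"
proof
  assume h: "q div 2 = p div 2 \<and> q mod 2 \<noteq> p mod 2"
  then consider "q mod 2 = 0" "p mod 2 = 1" | "q mod 2 = 1" "p mod 2 = 0"
    by fastforce
  then show "(p = Suc q \<and> even q) \<or> (q = Suc p \<and> even p)"
    using h div_mult_mod_eq[of q 2] div_mult_mod_eq[of p 2]
    by cases (simp_all add: even_iff_mod_2_eq_zero)
qed (auto elim!: evenE)

lemma flip_digit_iff:
  fixes r c K :: nat
  assumes "0 < K"
  shows "(r mod K = c mod K \<and> r div K div 2 = c div K div 2 \<and> r div K mod 2 \<noteq> c div K mod 2) \<longleftrightarrow>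
    (c = r + K \<and> even (r div K)) \<or> (r = c + K \<and> even (c div K))"
  unfolding add_eq_iff_div_mod[OF assms, of r c] add_eq_iff_div_mod[OF assms, of c r]
  using same_half_other_parity_iff[of "r div K" "c div K"] eq_commute[of "c mod K" "r mod K"] by blast

lemma index_kron_id_pauliX_id:
  fixes A K r c :: nat
  assumes "0 < K" "r < A * 2 * K" "c < A * 2 * K"
  shows "kron (kron (1\<^sub>m A) pauliX) (1\<^sub>m K) $$ (r,c) =
    of_bool (c = r + K \<and> even (r div K)) + of_bool (r = c + K \<and> even (c div K))"
proof -
  have "r div K < A * 2" "c div K < A * 2"
    using assms by (simp_all add: less_mult_imp_div_less)
  then have "kron (kron (1\<^sub>m A) pauliX) (1\<^sub>m K) $$ (r,c) =
      of_bool (r mod K = c mod K \<and> r div K div 2 = c div K div 2 \<and> r div K mod 2 \<noteq> c div K mod 2)"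
    using assms by (simp add: index_kron pauliX_def less_mult_imp_div_less)
  also have "\<dots> = of_bool ((c = r + K \<and> even (r div K)) \<or> (r = c + K \<and> even (c div K)))"
    unfolding flip_digit_iff[OF assms(1)] ..
  also have "\<dots> = of_bool (c = r + K \<and> even (r div K)) + of_bool (r = c + K \<and> even (c div K))"
    using assms(1) by auto
  finally show ?thesis .
qed

lemma power_two_split:
  assumes "m < n"
  shows "2 ^ (n - Suc m) * 2 * 2 ^ m = (2::nat) ^ n"
proof -
  have "(2::nat) ^ n = 2 ^ ((n - Suc m) + 1 + m)"
    using assms by simp
  then show ?thesis
    by (simp add: power_add)
qed

lemma Tk_carrier: "m < n \<Longrightarrow> Tk n m \<in> carrier_mat (2^n) (2^n)"
  unfolding Tk_def kron_pow_id2 carrier_mat_def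
  by (simp add: pauliX_def power_two_split)

lemma index_Tk:
  assumes "m < n" "r < 2^n" "c < 2^n"
  shows "Tk n m $$ (r,c) =
    of_bool (c = r + 2^m \<and> even (r div 2^m)) + of_bool (r = c + 2^m \<and> even (c div 2^m))"
  unfolding Tk_def kron_pow_id2
  by (rule index_kron_id_pauliX_id) (use assms power_two_split[OF assms(1)] in simp_all)

definition perm_mat :: "nat \<Rightarrow> (nat \<Rightarrow> nat) \<Rightarrow> 'a :: semiring_1 mat" where
  "perm_mat N s = mat N N (\<lambda>(r,c). of_bool (r = s c))"

lemma perm_mat_carrier [simp]: "perm_mat N s \<in> carrier_mat N N"
  by (simp add: perm_mat_def)

lemma dim_perm_mat [simp]: "dim_row (perm_mat N s) = N" "dim_col (perm_mat N s) = N"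
  by (simp_all add: perm_mat_def)

lemma index_mult_perm_mat:
  assumes "dim_col B = N" "r < dim_row B" "c < N" "s c < N"
  shows "(B * perm_mat N s) $$ (r,c) = B $$ (r, s c)"
  using assms by (simp add: perm_mat_def scalar_prod_def sum_of_bool_eq_conj)

lemma index_transpose_perm_mat_mult:
  assumes "dim_row B = N" "r < N" "c < dim_col B" "s r < N"
  shows "(transpose_mat (perm_mat N s) * B) $$ (r,c) = B $$ (s r, c)"
  using assms by (simp add: perm_mat_def scalar_prod_def sum_of_bool_eq_conj)

lemma perm_mat_mult:
  assumes "\<And>x. x < N \<Longrightarrow> t x < N"
  shows "perm_mat N s * perm_mat N t = (perm_mat N (s \<circ> t) :: 'a :: semiring_1 mat)"
proof (rule eq_matI)
  fix i j
  assume "i < dim_row (perm_mat N (s \<circ> t) :: 'a mat)" "j < dim_col (perm_mat N (s \<circ> t) :: 'a mat)"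
  then show "(perm_mat N s * perm_mat N t) $$ (i, j) = (perm_mat N (s \<circ> t) :: 'a mat) $$ (i, j)"
    using assms by (subst index_mult_perm_mat) (simp_all add: perm_mat_def)
qed simp_all

lemma index_perm_mat_conj:
  assumes "E \<in> carrier_mat N N" "r < N" "c < N" "\<And>x. x < N \<Longrightarrow> s x < N"
  shows "(transpose_mat (perm_mat N s) * E * perm_mat N s) $$ (r,c) = E $$ (s r, s c)"
proof -
  have "(transpose_mat (perm_mat N s) * E * perm_mat N s) $$ (r,c) = (transpose_mat (perm_mat N s) * E) $$ (r, s c)"
    using assms by (intro index_mult_perm_mat) auto
  also have "\<dots> = E $$ (s r, s c)"
    using assms by (intro index_transpose_perm_mat_mult) auto
  finally show ?thesis .
qed

definition cyclic_shift :: "nat \<Rightarrow> nat \<Rightarrow> nat \<Rightarrow> nat" where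
  "cyclic_shift N k x = nat ((int x - int k) mod int N)"

lemma cyclic_shift_less: "0 < N \<Longrightarrow> cyclic_shift N k x < N"
  by (simp add: cyclic_shift_def nat_less_iff)

lemma cyclic_shift_0: "x < N \<Longrightarrow> cyclic_shift N 0 x = x"
  by (simp add: cyclic_shift_def)

lemma cyclic_shift_comp: "0 < N \<Longrightarrow> cyclic_shift N k \<circ> cyclic_shift N l = cyclic_shift N (k + l)"
  by (simp add: fun_eq_iff cyclic_shift_def mod_diff_left_eq algebra_simps)

lemma cyclic_shift_eq:
  assumes "x < N" "K \<le> N"
  shows "cyclic_shift N K x = (if K \<le> x then x - K else x + N - K)"
proof (cases "K \<le> x")
  case True
  then show ?thesis
    using assms by (simp add: cyclic_shift_def mod_pos_pos_trivial of_nat_diff)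
next
  case False
  have "(int x - int K) mod int N = (int x - int K + int N) mod int N"
    by simp
  also have "\<dots> = int x - int K + int N"
    using False assms by (intro mod_pos_pos_trivial) auto
  finally have "(int x - int K) mod int N = int x - int K + int N" .
  then show ?thesis
    using False assms by (simp add: cyclic_shift_def nat_diff_distrib)
qed

lemma cyclic_shift_eq_iff:
  assumes "x < N" "y + K < N"
  shows "cyclic_shift N K x = y \<longleftrightarrow> x = y + K"
  using assms by (auto simp: cyclic_shift_eq)

lemma Pdec_eq_perm_mat: "Pdec N = perm_mat N (cyclic_shift N 1)"
  by (rule eq_matI) (auto simp: Pdec_def perm_mat_def cyclic_shift_def)

lemma Pdec_power: "0 < N \<Longrightarrow> Pdec N ^\<^sub>m k = perm_mat N (cyclic_shift N k)"
proof (induction k)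
  case 0
  then show ?case
    by (auto intro!: eq_matI simp: perm_mat_def cyclic_shift_0 Pdec_def)
next
  case (Suc k)
  then show ?case
    by (simp add: Pdec_eq_perm_mat perm_mat_mult cyclic_shift_less cyclic_shift_comp)
qed

lemma transpose_Pdec_power:
  "0 < N \<Longrightarrow> transpose_mat (Pdec N) ^\<^sub>m k = transpose_mat (perm_mat N (cyclic_shift N k))"
proof (induction k)
  case 0
  then show ?case
    by (auto intro!: eq_matI simp: perm_mat_def cyclic_shift_0 Pdec_def)
next
  case (Suc k)
  have "transpose_mat (Pdec N) ^\<^sub>m Suc k =
      transpose_mat (perm_mat N (cyclic_shift N 1) * perm_mat N (cyclic_shift N k))"
    using Suc by (simp add: Pdec_eq_perm_mat transpose_mult[of _ N N _ N])
  also have "\<dots> = transpose_mat (perm_mat N (cyclic_shift N (Suc k)))"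
    using Suc by (simp add: perm_mat_mult cyclic_shift_less cyclic_shift_comp)
  finally show ?case .
qed

lemma index_Pdec_conj:
  assumes "0 < N" "E \<in> carrier_mat N N" "r < N" "c < N"
  shows "(transpose_mat (Pdec N) ^\<^sub>m k * E * Pdec N ^\<^sub>m k) $$ (r,c) =
    E $$ (cyclic_shift N k r, cyclic_shift N k c)"
  unfolding Pdec_power[OF assms(1)] transpose_Pdec_power[OF assms(1)]
  using assms by (intro index_perm_mat_conj) (auto simp: cyclic_shift_less)

(* (i, j) is a nonzero entry of T_k above the diagonal that survives in E_k, and conjugation
   by P^K moves it to (r, c). *)
lemma cyclic_shift_pair_iff:
  fixes K N r c :: nat
  assumes "0 < K" "2 * K \<le> N" "r < N" "c < N"
  defines "i \<equiv> cyclic_shift N K r" and "j \<equiv> cyclic_shift N K c"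
  shows "((i < N - 2 * K \<or> j < N - 2 * K) \<and> j = i + K \<and> even (i div K)) \<longleftrightarrow>
    (c = r + K \<and> odd (r div K))"
proof
  assume h: "(i < N - 2 * K \<or> j < N - 2 * K) \<and> j = i + K \<and> even (i div K)"
  then have "i + K < N" "j + K < N"
    using assms(2) by auto
  then have "r = i + K" "c = j + K"
    using cyclic_shift_eq_iff[of r N i K] cyclic_shift_eq_iff[of c N j K] assms(3,4)
    by (simp_all add: i_def j_def)
  then show "c = r + K \<and> odd (r div K)"
    using h assms(1) by (simp add: div_add_self2)
next
  assume h: "c = r + K \<and> odd (r div K)"
  have "K \<le> r"
  proof (rule ccontr)
    assume "\<not> K \<le> r"
    then show False
      using h by simp
  qed
  define y where "y = r - K"
  have r: "r = y + K"
    using \<open>K \<le> r\<close> by (simp add: y_def)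
  have "i = y"
    using cyclic_shift_eq_iff[of r N y K] r h assms(3,4) by (simp add: i_def)
  moreover have "j = r"
    using cyclic_shift_eq_iff[of c N r K] h assms(4) by (simp add: j_def)
  moreover have "r div K = Suc (y div K)"
    using r assms(1) by (simp add: div_add_self2)
  ultimately show "(i < N - 2 * K \<or> j < N - 2 * K) \<and> j = i + K \<and> even (i div K)"
    using h r assms(4) by auto
qed

lemma index_Ek_conj:
  assumes "m < n" "r < 2^n" "c < 2^n"
  shows "(transpose_mat (Pdec (2^n)) ^\<^sub>m 2^m * Ek n m * Pdec (2^n) ^\<^sub>m 2^m) $$ (r,c) =
    of_bool (c = r + 2^m \<and> odd (r div 2^m)) + of_bool (r = c + 2^m \<and> odd (c div 2^m))"
proof -
  define N K :: nat where "N = 2^n" and "K = 2^m"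
  define i j where "i = cyclic_shift N K r" and "j = cyclic_shift N K c"
  have "2 * K \<le> N"
    using power_increasing[of "Suc m" n "2::nat"] assms(1) by (simp add: N_def K_def)
  have "i < N" "j < N"
    by (simp_all add: i_def j_def N_def cyclic_shift_less)
  have "(transpose_mat (Pdec N) ^\<^sub>m K * Ek n m * Pdec N ^\<^sub>m K) $$ (r,c) = Ek n m $$ (i,j)"
    using assms by (simp add: index_Pdec_conj i_def j_def N_def Ek_def)
  also have "\<dots> = of_bool ((i < N - 2 * K \<or> j < N - 2 * K) \<and> j = i + K \<and> even (i div K))
      + of_bool ((j < N - 2 * K \<or> i < N - 2 * K) \<and> i = j + K \<and> even (j div K))"
    using \<open>i < N\<close> \<open>j < N\<close> assms(1) by (auto simp: Ek_def index_Tk N_def K_def)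
  also have "\<dots> = of_bool (c = r + K \<and> odd (r div K)) + of_bool (r = c + K \<and> odd (c div K))"
    using cyclic_shift_pair_iff[of K N r c] cyclic_shift_pair_iff[of K N c r]
      \<open>2 * K \<le> N\<close> assms(2,3) by (simp add: i_def j_def N_def K_def)
  finally show ?thesis
    by (simp add: N_def K_def)
qed

lemma Mk_eq_Tk_plus_conj_Ek:
  assumes "m < n"
  shows "Mk n a (2^m) = a (2^m) \<cdot>\<^sub>m
    (Tk n m + transpose_mat (Pdec (2^n)) ^\<^sub>m 2^m * Ek n m * Pdec (2^n) ^\<^sub>m 2^m)"
proof -
  define Q where "Q = transpose_mat (Pdec (2^n)) ^\<^sub>m 2^m * Ek n m * Pdec (2^n) ^\<^sub>m 2^m"
  have T: "Tk n m \<in> carrier_mat (2^n) (2^n)"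
    using assms by (rule Tk_carrier)
  have Q: "Q \<in> carrier_mat (2^n) (2^n)"
    unfolding Q_def by (intro carrier_matI) (simp_all add: Pdec_def)
  have "Mk n a (2^m) = a (2^m) \<cdot>\<^sub>m (Tk n m + Q)"
  proof (rule eq_matI)
    fix r c
    assume "r < dim_row (a (2^m) \<cdot>\<^sub>m (Tk n m + Q))" "c < dim_col (a (2^m) \<cdot>\<^sub>m (Tk n m + Q))"
    then have rc: "r < 2^n" "c < 2^n"
      using Q by auto
    have "(a (2^m) \<cdot>\<^sub>m (Tk n m + Q)) $$ (r,c) = a (2^m) * (Tk n m $$ (r,c) + Q $$ (r,c))"
      using T Q rc by simp
    also have "\<dots> = a (2^m) * (of_bool (c = r + 2^m) + of_bool (r = c + 2^m))"
      unfolding Q_def index_Tk[OF assms rc] index_Ek_conj[OF assms rc]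
      by (cases "c = r + 2^m"; cases "r = c + 2^m") simp_all
    also have "\<dots> = Mk n a (2^m) $$ (r,c)"
      using rc by (simp add: index_Mk)
    finally show "Mk n a (2^m) $$ (r,c) = (a (2^m) \<cdot>\<^sub>m (Tk n m + Q)) $$ (r,c)" ..
  qed (use T Q Mk_carrier in auto)
  then show ?thesis
    by (simp add: Q_def)
qed

lemma Mk_eq_Tk_top:
  "Mk (Suc m) a (2^m) = a (2^m) \<cdot>\<^sub>m Tk (Suc m) m"
proof -
  have T: "Tk (Suc m) m \<in> carrier_mat (2 * 2^m) (2 * 2^m)"
    using Tk_carrier[of m "Suc m"] by simp
  show ?thesis
  proof (rule eq_matI)
    fix r c
    assume "r < dim_row (a (2^m) \<cdot>\<^sub>m Tk (Suc m) m)" "c < dim_col (a (2^m) \<cdot>\<^sub>m Tk (Suc m) m)"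
    then have rc: "r < 2 * 2^m" "c < 2 * 2^m"
      using T by auto
    then have "c = r + 2^m \<longrightarrow> r div 2^m = 0" "r = c + 2^m \<longrightarrow> c div 2^m = 0"
      by simp_all
    then show "Mk (Suc m) a (2^m) $$ (r,c) = (a (2^m) \<cdot>\<^sub>m Tk (Suc m) m) $$ (r,c)"
      using T rc by (auto simp: index_Mk index_Tk)
  qed (use T Mk_carrier[of "Suc m"] in auto)
qed

theorem theorem1:
  fixes n m k :: nat and a :: "nat \<Rightarrow> complex"
  assumes "n \<ge> 1" and "m \<le> n - 1" and "k = 2^m"
  shows "Mk n a k =
    (if m < n - 1
     then a k \<cdot>\<^sub>m (Tk n m + (transpose_mat (Pdec (2^n)) ^\<^sub>m k) * Ek n m * (Pdec (2^n) ^\<^sub>m k))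
     else a k \<cdot>\<^sub>m Tk n m)"
proof (cases "m < n - 1")
  case True
  then show ?thesis
    using Mk_eq_Tk_plus_conj_Ek[of m n a] assms(3) by simp
next
  case False
  then have "n = Suc m"
    using assms(1,2) by linarith
  with False show ?thesis
    using Mk_eq_Tk_top[of m a] assms(3) by simp
qed

end
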